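(* Let $p>1$ and $0<a<1$. Let $r$ be a number with $0<a<a+r<1$ and set $c=b_{\mathbb{D},p}(a,a+r)$. Then \[ \{z:|z-a|<r\}\subset B_{\mathbb{D},p}(a;c). \]
   Context: $\mathbb{D}=\{z\in\mathbb{C}:|z|<1\}$. For $z_1,z_2\in\mathbb{D}$ and $p\ge1$, $b_{\mathbb{D},p}(z_1,z_2)=\sup_{z\in\partial\mathbb{D}}\frac{|z_1-z_2|}{\sqrt[p]{|z_1-z|^p+|z-z_2|^p}}$, and $B_{\mathbb{D},p}(a;c)=\{z\in\mathbb{D}: b_{\mathbb{D},p}(a,z)<c\}$. *)

theory Defs
  imports "HOL-Analysis.Analysis"
begin

text \<open>The unit disk D = ball 0 1 in the complex plane; its boundary is sphere 0 1.
  The p-th root is written as powr (1/p); the base is positive whenever z1 and z2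
  lie in the open disk and z is on the unit circle.\<close>

definition b_D :: "real \<Rightarrow> complex \<Rightarrow> complex \<Rightarrow> real" where
  "b_D p z1 z2 = (SUP z\<in>sphere (0::complex) 1.
      cmod (z1 - z2) / ((cmod (z1 - z) powr p + cmod (z - z2) powr p) powr (1 / p)))"

definition B_D :: "real \<Rightarrow> complex \<Rightarrow> real \<Rightarrow> complex set" where
  "B_D p a c = {z \<in> ball 0 1. b_D p a z < c}"

end

theory Submission
  imports Defs
begin

text \<open>For w on the unit circle and z in the disk, 1 - |z| \<le> |w - z|.  With z in the disk
  {|z - a| < r} both distances in the denominator of the quotient defining b_D p a z are therefore
  at least 1 - a and 1 - a - r, so b_D p a z \<le> |a - z| / G with
  G = ((1 - a)^p + (1 - a - r)^p)^(1/p).  The boundary point w = 1 attains these bounds for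
  z = a + r, whence b_D p a (a + r) \<ge> r / G > |a - z| / G.\<close>

lemma powr_mean_denominator_pos:
  fixes p s t :: real
  assumes "0 < s" "0 \<le> t"
  shows "0 < (s powr p + t powr p) powr (1 / p)"
proof -
  have "0 < s powr p + t powr p"
    using assms by (simp add: add_pos_nonneg)
  then show ?thesis by simp
qed

lemma divide_powr_mean_antimono:
  fixes p d s t x y :: real
  assumes "p > 0" "0 \<le> d" "0 < s" "0 \<le> t" "s \<le> x" "t \<le> y"
  shows "d / (x powr p + y powr p) powr (1 / p) \<le> d / (s powr p + t powr p) powr (1 / p)"
proof -
  have "s powr p + t powr p \<le> x powr p + y powr p"
    using assms by (intro add_mono powr_mono2) auto
  then have le: "(s powr p + t powr p) powr (1 / p) \<le> (x powr p + y powr p) powr (1 / p)"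
    using assms by (intro powr_mono2) auto
  have pos: "0 < (s powr p + t powr p) powr (1 / p)"
    using assms by (intro powr_mean_denominator_pos)
  have "0 < (x powr p + y powr p) powr (1 / p) * (s powr p + t powr p) powr (1 / p)"
    using pos le by (intro mult_pos_pos) auto
  then show ?thesis
    by (rule divide_left_mono[OF le \<open>0 \<le> d\<close>])
qed

lemma norm_diff_unit_sphere_ge:
  fixes w z :: complex
  assumes "w \<in> sphere 0 1"
  shows "1 - cmod z \<le> cmod (w - z)"
  using assms norm_triangle_ineq2[of w z] by simp

lemma b_D_le_of_boundary_dist:
  fixes p s t :: real and z1 z2 :: complex
  assumes "p > 0" "0 < s" "0 \<le> t"
    and "\<And>w. w \<in> sphere 0 1 \<Longrightarrow> s \<le> cmod (z1 - w) \<and> t \<le> cmod (w - z2)"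
  shows "b_D p z1 z2 \<le> cmod (z1 - z2) / (s powr p + t powr p) powr (1 / p)"
  unfolding b_D_def
proof (rule cSUP_least)
  show "sphere (0::complex) 1 \<noteq> {}"
    using norm_one by (metis empty_iff mem_sphere_0)
qed (use assms in \<open>auto intro!: divide_powr_mean_antimono\<close>)

lemma b_D_ge_at_boundary_point:
  fixes p :: real and z1 z2 w :: complex
  assumes "p > 0" "cmod z1 < 1" "w \<in> sphere 0 1"
  shows "cmod (z1 - z2) / (cmod (z1 - w) powr p + cmod (w - z2) powr p) powr (1 / p)
    \<le> b_D p z1 z2"
  unfolding b_D_def
proof (rule cSUP_upper[OF \<open>w \<in> sphere 0 1\<close>], rule bdd_aboveI2)
  fix v :: complex assume "v \<in> sphere 0 1"
  then have "1 - cmod z1 \<le> cmod (z1 - v)"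
    using norm_diff_unit_sphere_ge[of v z1] by (simp add: norm_minus_commute)
  with assms show "cmod (z1 - z2) / (cmod (z1 - v) powr p + cmod (v - z2) powr p) powr (1 / p)
    \<le> cmod (z1 - z2) / ((1 - cmod z1) powr p + 0 powr p) powr (1 / p)"
    by (intro divide_powr_mean_antimono) auto
qed

theorem theorem3p19:
  fixes p a r :: real
  assumes "p > 1" and "0 < a" and "a < 1" and "0 < r" and "a + r < 1"
  shows "ball (complex_of_real a) r \<subseteq> B_D p (complex_of_real a) (b_D p (complex_of_real a) (complex_of_real (a + r)))"
proof
  fix z assume "z \<in> ball (complex_of_real a) r"
  then have dist_az: "cmod (complex_of_real a - z) < r"
    by (simp add: dist_norm)
  then have norm_z: "cmod z < a + r"
    using norm_triangle_ineq2[of z "complex_of_real a"] assms by (simp add: norm_minus_commute)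
  define G where "G = ((1 - a) powr p + (1 - a - r) powr p) powr (1 / p)"
  have "0 < G"
    unfolding G_def using assms by (intro powr_mean_denominator_pos) auto
  have "b_D p (complex_of_real a) z \<le> cmod (complex_of_real a - z) / G"
    unfolding G_def
  proof (rule b_D_le_of_boundary_dist)
    fix w :: complex assume "w \<in> sphere 0 1"
    then show "1 - a \<le> cmod (complex_of_real a - w) \<and> 1 - a - r \<le> cmod (w - z)"
      using norm_diff_unit_sphere_ge[of w "complex_of_real a"] norm_diff_unit_sphere_ge[of w z]
        norm_z assms by (auto simp: norm_minus_commute)
  qed (use assms in auto)
  also have "\<dots> < r / G"
    using dist_az \<open>0 < G\<close> by (simp add: divide_strict_right_mono)
  also have "r / G \<le> b_D p (complex_of_real a) (complex_of_real (a + r))"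
  proof -
    have "cmod (complex_of_real a - 1) = cmod (complex_of_real (1 - a))"
      "cmod (1 - complex_of_real (a + r)) = cmod (complex_of_real (1 - a - r))"
      by (simp_all add: norm_minus_commute del: of_real_add add: algebra_simps)
    then have "cmod (complex_of_real a - 1) = 1 - a" "cmod (1 - complex_of_real (a + r)) = 1 - a - r"
      using assms by (simp_all only: norm_of_real)
    moreover have "cmod (complex_of_real a - complex_of_real (a + r)) = r"
      using assms by simp
    ultimately show ?thesis
      using b_D_ge_at_boundary_point[of p "complex_of_real a" 1 "complex_of_real (a + r)"] assms
      by (simp add: G_def)
  qed
  finally show "z \<in> B_D p (complex_of_real a) (b_D p (complex_of_real a) (complex_of_real (a + r)))"
    unfolding B_D_def using norm_z assms by auto
qed

end
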